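(* Let $f:\mathbb{R}^d\to\mathbb{R}$ be $\beta$-smooth with minimum value $f^\star$, and run AdaSGD (as defined in the context) with parameters $\eta,\gamma>0$ using a stochastic gradient oracle with bounded affine noise with parameters $\sigma_0,\sigma_1\ge0$. Then for all $t\ge1$, $$\sum_{s=1}^t|\tilde\eta_s-\eta_s|\,(\nabla f(w_s)\cdot g_s)\le\frac{\bar\Delta_t}4+\frac12\sum_{s=1}^t\tilde\eta_s\|\nabla f(w_s)\|^2+2\eta\sigma_0\sum_{s=1}^t\frac{\|g_s\|^2}{G_s^2}+8\eta^2\beta\sigma_1^2\Big(\sum_{s=1}^t\frac{\|g_s\|^2}{G_s^2}\Big)^2.$$
   Context: $\|\cdot\|$ is the Euclidean norm. $\beta$-smooth: $\|\nabla f(x)-\nabla f(y)\|\le\beta\|x-y\|$. Oracle: queried at $w$, returns random $g(w)$ with $\mathbb{E}[g(w)\mid w]=\nabla f(w)$ and, with probability one, $\|g(w)-\nabla f(w)\|^2\le\sigma_0^2+\sigma_1^2\|\nabla f(w)\|^2$. AdaSGD: arbitrary $w_1$; for each $t$, $g_t=g(w_t)$, $G_t=\sqrt{\gamma^2+\sum_{s=1}^t\|g_s\|^2}$ (so $G_0=\gamma$), $\eta_t=\eta/G_t$, $w_{t+1}=w_t-\eta_tg_t$. Decorrelated step sizes: $\tilde\eta_t=\eta/\sqrt{G_{t-1}^2+(1+\sigma_1^2)\|\nabla f(w_t)\|^2+\sigma_0^2}$. $\bar\Delta_t=\max_{s\le t}f(w_s)-f^\star$. *)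

theory Defs
  imports "HOL-Analysis.Analysis"
begin

text \<open>AdaSGD quantities. Iterations are indexed from 1; g t is the stochastic
gradient returned at iterate w t.\<close>

definition adaG :: "real \<Rightarrow> (nat \<Rightarrow> 'a::euclidean_space) \<Rightarrow> nat \<Rightarrow> real" where
  "adaG \<gamma> g t = sqrt (\<gamma>\<^sup>2 + (\<Sum>s=1..t. (norm (g s))\<^sup>2))"

definition ada_eta :: "real \<Rightarrow> real \<Rightarrow> (nat \<Rightarrow> 'a::euclidean_space) \<Rightarrow> nat \<Rightarrow> real" where
  "ada_eta \<eta> \<gamma> g t = \<eta> / adaG \<gamma> g t"

definition eta_tilde :: "real \<Rightarrow> real \<Rightarrow> real \<Rightarrow> real \<Rightarrow> ('a::euclidean_space \<Rightarrow> 'a)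
    \<Rightarrow> (nat \<Rightarrow> 'a) \<Rightarrow> (nat \<Rightarrow> 'a) \<Rightarrow> nat \<Rightarrow> real" where
  "eta_tilde \<eta> \<gamma> \<sigma>\<^sub>0 \<sigma>\<^sub>1 gradf w g t =
     \<eta> / sqrt ((adaG \<gamma> g (t - 1))\<^sup>2 + (1 + \<sigma>\<^sub>1\<^sup>2) * (norm (gradf (w t)))\<^sup>2 + \<sigma>\<^sub>0\<^sup>2)"

definition Delta_bar :: "('a \<Rightarrow> real) \<Rightarrow> real \<Rightarrow> (nat \<Rightarrow> 'a) \<Rightarrow> nat \<Rightarrow> real" where
  "Delta_bar f fstar w t = Max ((\<lambda>s. f (w s)) ` {1..t}) - fstar"

end

theory Submission
  imports Defs
begin

text \<open>
  With \<open>P = G\<^sub>s\<^sub>-\<^sub>1\<^sup>2\<close>, \<open>n = \<parallel>g\<^sub>s\<parallel>\<close>, \<open>N = \<parallel>\<nabla>f(w\<^sub>s)\<parallel>\<close> and \<open>\<sigma>\<^sup>2 = \<sigma>\<^sub>0\<^sup>2 + \<sigma>\<^sub>1\<^sup>2 N\<^sup>2\<close>, the two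
  step sizes are \<open>\<eta> / sqrt (P + n\<^sup>2)\<close> and \<open>\<eta> / sqrt (P + N\<^sup>2 + \<sigma>\<^sup>2)\<close>, and the noise
  bound gives \<open>\<bar>n - N\<bar> \<le> \<sigma>\<close>. By Cauchy-Schwarz the two square roots then differ by at
  most \<open>sqrt 2 \<sigma>\<close>, so the \<open>s\<close>-th summand is at most \<open>\<eta> / sqrt (P + N\<^sup>2 + \<sigma>\<^sup>2)\<close> times
  \<open>N \<cdot> sqrt 2 \<sigma> n / G\<^sub>s\<close>, and AM-GM splits this product into the decorrelated term
  \<open>N\<^sup>2/2\<close> and \<open>\<sigma>\<^sup>2 n\<^sup>2 / G\<^sub>s\<^sup>2\<close>, where one factor \<open>\<sigma>\<close> cancels against the step size.
  Finally \<open>\<sigma> \<le> \<sigma>\<^sub>0 + \<sigma>\<^sub>1 N\<close> and, by smoothness, \<open>N\<^sup>2 \<le> 2 \<beta> \<Delta>\<^sub>t\<close>; a last AM-GM absorbs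
  the resulting \<open>sqrt \<Delta>\<^sub>t\<close> into \<open>\<Delta>\<^sub>t / 4\<close>.
\<close>

lemma sqrt_add_square_diff_le:
  fixes P a b c :: real
  assumes "P \<ge> 0"
  shows "(sqrt (P + a\<^sup>2) - sqrt (P + b\<^sup>2 + c\<^sup>2))\<^sup>2 \<le> (a - b)\<^sup>2 + c\<^sup>2"
proof -
  define ra where "ra = sqrt (P + a\<^sup>2)"
  define rb where "rb = sqrt (P + b\<^sup>2 + c\<^sup>2)"
  have ra2: "ra\<^sup>2 = P + a\<^sup>2" and rb2: "rb\<^sup>2 = P + b\<^sup>2 + c\<^sup>2"
    unfolding ra_def rb_def using assms by simp_all
  have "(P + a * b)\<^sup>2 = (P + a\<^sup>2) * (P + b\<^sup>2) - P * (a - b)\<^sup>2"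
    by (simp add: power2_eq_square algebra_simps)
  also have "\<dots> \<le> (P + a\<^sup>2) * (P + b\<^sup>2)"
    using assms by simp
  also have "\<dots> \<le> (ra * rb)\<^sup>2"
    unfolding power_mult_distrib ra2 rb2 using assms by (intro mult_left_mono) auto
  finally have "P + a * b \<le> ra * rb"
    by (rule power2_le_imp_le) (use assms in \<open>simp add: ra_def rb_def\<close>)
  then have "(ra - rb)\<^sup>2 \<le> (a - b)\<^sup>2 + c\<^sup>2"
    using ra2 rb2 by (simp add: power2_eq_square algebra_simps)
  then show ?thesis unfolding ra_def rb_def .
qed

lemma inverse_sqrt_gap_mult_le:
  fixes P n N \<sigma> \<eta> ip :: real
  assumes P: "P > 0" and \<eta>: "\<eta> \<ge> 0" and \<sigma>: "\<sigma> \<ge> 0"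
    and nN: "(n - N)\<^sup>2 \<le> \<sigma>\<^sup>2" and ip: "ip \<le> N * n"
  shows "\<bar>\<eta> / sqrt (P + N\<^sup>2 + \<sigma>\<^sup>2) - \<eta> / sqrt (P + n\<^sup>2)\<bar> * ip
     \<le> 1/2 * (\<eta> / sqrt (P + N\<^sup>2 + \<sigma>\<^sup>2)) * N\<^sup>2 + \<eta> * \<sigma> * n\<^sup>2 / (P + n\<^sup>2)"
proof -
  define ra where "ra = sqrt (P + n\<^sup>2)"
  define rb where "rb = sqrt (P + N\<^sup>2 + \<sigma>\<^sup>2)"
  define x where "x = \<bar>ra - rb\<bar>"
  have ra: "ra > 0" and rb: "rb > 0" unfolding ra_def rb_def using P by (simp_all add: add_pos_nonneg)
  have ra2: "ra\<^sup>2 = P + n\<^sup>2" and rb2: "rb\<^sup>2 = P + N\<^sup>2 + \<sigma>\<^sup>2"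
    unfolding ra_def rb_def using P by simp_all
  have \<sigma>_le_rb: "\<sigma> \<le> rb"
    by (rule power2_le_imp_le) (use P rb2 rb in auto)
  have x2: "x\<^sup>2 \<le> 2 * \<sigma>\<^sup>2"
    using sqrt_add_square_diff_le[of P n N \<sigma>] P nN unfolding x_def ra_def rb_def by simp
  have gap: "\<bar>\<eta> / rb - \<eta> / ra\<bar> = \<eta> / rb * (x / ra)"
  proof -
    have "\<eta> / rb - \<eta> / ra = \<eta> / rb * ((ra - rb) / ra)" using ra rb by (simp add: field_simps)
    then show ?thesis using ra rb \<eta> unfolding x_def by (simp add: abs_mult)
  qed
  have "N * (x * n / ra) \<le> 1/2 * N\<^sup>2 + 1/2 * (x * n / ra)\<^sup>2"
    using zero_le_power2[of "N - x * n / ra"] unfolding power2_diff by linarith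
  also have "\<dots> = 1/2 * N\<^sup>2 + x\<^sup>2 / 2 * (n\<^sup>2 / (P + n\<^sup>2))"
    by (simp add: power_mult_distrib power_divide ra2)
  also have "\<dots> \<le> 1/2 * N\<^sup>2 + \<sigma>\<^sup>2 * (n\<^sup>2 / (P + n\<^sup>2))"
    using x2 P by (intro add_left_mono mult_right_mono) auto
  finally have amgm: "N * (x * n / ra) \<le> 1/2 * N\<^sup>2 + \<sigma>\<^sup>2 * n\<^sup>2 / (P + n\<^sup>2)"
    by simp
  have "\<bar>\<eta> / rb - \<eta> / ra\<bar> * ip \<le> \<bar>\<eta> / rb - \<eta> / ra\<bar> * (N * n)"
    using ip by (intro mult_left_mono) auto
  also have "\<dots> = \<eta> / rb * (N * (x * n / ra))"
    unfolding gap by simp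
  also have "\<dots> \<le> \<eta> / rb * (1/2 * N\<^sup>2 + \<sigma>\<^sup>2 * n\<^sup>2 / (P + n\<^sup>2))"
    using amgm \<eta> rb by (intro mult_left_mono) auto
  also have "\<dots> = 1/2 * (\<eta> / rb) * N\<^sup>2 + \<eta> * \<sigma> * n\<^sup>2 / (P + n\<^sup>2) * (\<sigma> / rb)"
    by (simp add: algebra_simps power2_eq_square)
  also have "\<dots> \<le> 1/2 * (\<eta> / rb) * N\<^sup>2 + \<eta> * \<sigma> * n\<^sup>2 / (P + n\<^sup>2)"
    using \<sigma>_le_rb rb \<eta> \<sigma> P by (intro add_left_mono mult_left_le) auto
  finally show ?thesis unfolding ra_def rb_def .
qed

lemma smooth_descent_le:
  fixes f :: "'a::real_inner \<Rightarrow> real" and gradf :: "'a \<Rightarrow> 'a"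
  assumes grad: "\<And>x. (f has_derivative (\<lambda>h. gradf x \<bullet> h)) (at x)"
    and smooth: "\<And>x y. norm (gradf x - gradf y) \<le> \<beta> * norm (x - y)"
  shows "f y \<le> f x + gradf x \<bullet> (y - x) + \<beta>/2 * (norm (y - x))\<^sup>2"
proof -
  define h where "h = y - x"
  define \<phi> where "\<phi> \<tau> = f (x + \<tau> *\<^sub>R h) - \<tau> * (gradf x \<bullet> h) - \<beta>/2 * \<tau>\<^sup>2 * (norm h)\<^sup>2" for \<tau>
  have "\<phi> 1 \<le> \<phi> 0"
  proof (rule DERIV_nonpos_imp_nonincreasing[of 0 1])
    fix \<tau> :: real
    assume "0 \<le> \<tau>" "\<tau> \<le> 1"
    define d where "d = gradf (x + \<tau> *\<^sub>R h) \<bullet> h - gradf x \<bullet> h - \<beta> * \<tau> * (norm h)\<^sup>2"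
    have "((\<lambda>\<tau>. f (x + \<tau> *\<^sub>R h)) has_derivative (\<lambda>c. gradf (x + \<tau> *\<^sub>R h) \<bullet> (c *\<^sub>R h))) (at \<tau>)"
      by (rule has_derivative_compose[OF _ grad]) (auto intro!: derivative_eq_intros)
    then have "((\<lambda>\<tau>. f (x + \<tau> *\<^sub>R h)) has_real_derivative gradf (x + \<tau> *\<^sub>R h) \<bullet> h) (at \<tau>)"
      by (simp add: has_field_derivative_def mult_commute_abs)
    then have "(\<phi> has_real_derivative d) (at \<tau>)"
      unfolding \<phi>_def d_def by (auto intro!: derivative_eq_intros)
    moreover have "gradf (x + \<tau> *\<^sub>R h) \<bullet> h - gradf x \<bullet> h \<le> \<beta> * \<tau> * (norm h)\<^sup>2"
    proof -
      have "gradf (x + \<tau> *\<^sub>R h) \<bullet> h - gradf x \<bullet> h \<le> norm (gradf (x + \<tau> *\<^sub>R h) - gradf x) * norm h"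
        unfolding inner_diff_left[symmetric] by (rule norm_cauchy_schwarz)
      also have "\<dots> \<le> \<beta> * norm (\<tau> *\<^sub>R h) * norm h"
        using smooth[of "x + \<tau> *\<^sub>R h" x] by (intro mult_right_mono) auto
      finally show ?thesis
        using \<open>0 \<le> \<tau>\<close> by (simp add: power2_eq_square mult.assoc)
    qed
    ultimately show "\<exists>y. (\<phi> has_real_derivative y) (at \<tau>) \<and> y \<le> 0"
      unfolding d_def by auto
  qed simp
  then show ?thesis
    unfolding \<phi>_def h_def by simp
qed

lemma lipschitz_constant_nonneg:
  fixes F :: "'a::euclidean_space \<Rightarrow> 'b::real_normed_vector"
  assumes "\<And>x y. norm (F x - F y) \<le> \<beta> * norm (x - y)"
  shows "\<beta> \<ge> 0"
proof -
  obtain b :: 'a where "b \<in> Basis"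
    using nonempty_Basis by blast
  then have "norm b > 0"
    by (simp add: nonzero_Basis)
  moreover have "0 \<le> \<beta> * norm (b - 0)"
    using assms[of b 0] norm_ge_zero order_trans by blast
  ultimately show ?thesis
    by (simp add: zero_le_mult_iff)
qed

lemma smooth_grad_norm_square_le:
  fixes f :: "'a::euclidean_space \<Rightarrow> real" and gradf :: "'a \<Rightarrow> 'a"
  assumes grad: "\<And>x. (f has_derivative (\<lambda>h. gradf x \<bullet> h)) (at x)"
    and smooth: "\<And>x y. norm (gradf x - gradf y) \<le> \<beta> * norm (x - y)"
    and fmin: "\<And>x. fstar \<le> f x"
  shows "(norm (gradf x))\<^sup>2 \<le> 2 * \<beta> * (f x - fstar)"
proof -
  define n2 where "n2 = (norm (gradf x))\<^sup>2"
  have step: "fstar \<le> f x - c * n2 + \<beta>/2 * c\<^sup>2 * n2" for c :: real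
  proof -
    have "fstar \<le> f (x - c *\<^sub>R gradf x)"
      by (rule fmin)
    also have "\<dots> \<le> f x - c * n2 + \<beta>/2 * c\<^sup>2 * n2"
      using smooth_descent_le[OF grad smooth, of "x - c *\<^sub>R gradf x" x]
      by (simp add: n2_def power2_norm_eq_inner power_mult_distrib)
    finally show ?thesis .
  qed
  have "\<beta> \<ge> 0"
    by (rule lipschitz_constant_nonneg[OF smooth])
  then consider "\<beta> = 0" | "\<beta> > 0"
    by linarith
  then show ?thesis
  proof cases
    case 1
    have "n2 \<le> 0"
    proof (rule ccontr)
      assume "\<not> n2 \<le> 0"
      then show False
        using step[of "(f x - fstar + 1) / n2"] 1 by simp
    qed
    then show ?thesis
      using 1 by (simp add: n2_def)
  next
    case 2
    show ?thesis
      using step[of "1 / \<beta>"] 2 by (simp add: n2_def field_simps power2_eq_square)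
  qed
qed

lemma adaG_nonneg: "adaG \<gamma> g t \<ge> 0"
  unfolding adaG_def by (simp add: sum_nonneg add_nonneg_nonneg)

lemma adaG_square:
  "(adaG \<gamma> g t)\<^sup>2 = \<gamma>\<^sup>2 + (\<Sum>s=1..t. (norm (g s))\<^sup>2)"
  unfolding adaG_def by (simp add: sum_nonneg add_nonneg_nonneg)

lemma adaG_square_step:
  assumes "s \<ge> 1"
  shows "(adaG \<gamma> g s)\<^sup>2 = (adaG \<gamma> g (s - 1))\<^sup>2 + (norm (g s))\<^sup>2"
proof -
  obtain k where "s = Suc k"
    using assms by (cases s) auto
  then show ?thesis
    unfolding adaG_square by simp
qed

lemma eta_tilde_ada_eta_gap_le:
  fixes gradf :: "'a::euclidean_space \<Rightarrow> 'a" and w g :: "nat \<Rightarrow> 'a"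
  assumes \<eta>: "\<eta> \<ge> 0" and \<gamma>: "\<gamma> > 0" and \<sigma>\<^sub>0: "\<sigma>\<^sub>0 \<ge> 0" and \<sigma>\<^sub>1: "\<sigma>\<^sub>1 \<ge> 0" and s: "s \<ge> 1"
    and noise: "(norm (g s - gradf (w s)))\<^sup>2 \<le> \<sigma>\<^sub>0\<^sup>2 + \<sigma>\<^sub>1\<^sup>2 * (norm (gradf (w s)))\<^sup>2"
  shows "\<bar>eta_tilde \<eta> \<gamma> \<sigma>\<^sub>0 \<sigma>\<^sub>1 gradf w g s - ada_eta \<eta> \<gamma> g s\<bar> * (gradf (w s) \<bullet> g s)
    \<le> 1/2 * eta_tilde \<eta> \<gamma> \<sigma>\<^sub>0 \<sigma>\<^sub>1 gradf w g s * (norm (gradf (w s)))\<^sup>2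
       + \<eta> * (\<sigma>\<^sub>0 + \<sigma>\<^sub>1 * norm (gradf (w s))) * ((norm (g s))\<^sup>2 / (adaG \<gamma> g s)\<^sup>2)"
proof -
  define P where "P = (adaG \<gamma> g (s - 1))\<^sup>2"
  define N where "N = norm (gradf (w s))"
  define n where "n = norm (g s)"
  define \<sigma> where "\<sigma> = sqrt (\<sigma>\<^sub>0\<^sup>2 + \<sigma>\<^sub>1\<^sup>2 * N\<^sup>2)"
  have P: "P > 0"
    unfolding P_def adaG_square using \<gamma> by (simp add: add_pos_nonneg sum_nonneg)
  have G: "(adaG \<gamma> g s)\<^sup>2 = P + n\<^sup>2"
    unfolding P_def n_def using adaG_square_step[OF s] .
  have \<sigma>2: "\<sigma>\<^sup>2 = \<sigma>\<^sub>0\<^sup>2 + \<sigma>\<^sub>1\<^sup>2 * N\<^sup>2"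
    unfolding \<sigma>_def by simp
  have eta_tilde: "eta_tilde \<eta> \<gamma> \<sigma>\<^sub>0 \<sigma>\<^sub>1 gradf w g s = \<eta> / sqrt (P + N\<^sup>2 + \<sigma>\<^sup>2)"
    unfolding eta_tilde_def P_def N_def \<sigma>2 by (simp add: algebra_simps)
  have ada_eta: "ada_eta \<eta> \<gamma> g s = \<eta> / sqrt (P + n\<^sup>2)"
    unfolding ada_eta_def G[symmetric] using adaG_nonneg[of \<gamma> g s] by simp
  have "(n - N)\<^sup>2 \<le> (norm (g s - gradf (w s)))\<^sup>2"
    unfolding n_def N_def abs_le_square_iff[symmetric] by (simp add: norm_triangle_ineq3)
  then have nN: "(n - N)\<^sup>2 \<le> \<sigma>\<^sup>2"
    using noise unfolding \<sigma>2 N_def by linarith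
  have ip: "gradf (w s) \<bullet> g s \<le> N * n"
    unfolding N_def n_def by (rule norm_cauchy_schwarz)
  have "\<sigma> \<le> sqrt (\<sigma>\<^sub>0\<^sup>2) + sqrt (\<sigma>\<^sub>1\<^sup>2 * N\<^sup>2)"
    unfolding \<sigma>_def by (rule sqrt_add_le_add_sqrt) auto
  then have \<sigma>_le: "\<sigma> \<le> \<sigma>\<^sub>0 + \<sigma>\<^sub>1 * N"
    using \<sigma>\<^sub>0 \<sigma>\<^sub>1 by (simp add: N_def real_sqrt_mult)
  have "\<bar>eta_tilde \<eta> \<gamma> \<sigma>\<^sub>0 \<sigma>\<^sub>1 gradf w g s - ada_eta \<eta> \<gamma> g s\<bar> * (gradf (w s) \<bullet> g s)
      \<le> 1/2 * eta_tilde \<eta> \<gamma> \<sigma>\<^sub>0 \<sigma>\<^sub>1 gradf w g s * N\<^sup>2 + \<eta> * \<sigma> * (n\<^sup>2 / (P + n\<^sup>2))"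
    unfolding eta_tilde ada_eta using inverse_sqrt_gap_mult_le[OF P \<eta> _ nN ip]
    by (simp add: n_def N_def \<sigma>_def)
  also have "\<dots> \<le> 1/2 * eta_tilde \<eta> \<gamma> \<sigma>\<^sub>0 \<sigma>\<^sub>1 gradf w g s * N\<^sup>2 + \<eta> * (\<sigma>\<^sub>0 + \<sigma>\<^sub>1 * N) * (n\<^sup>2 / (P + n\<^sup>2))"
    using \<sigma>_le \<eta> P by (intro add_left_mono mult_right_mono mult_left_mono) auto
  finally show ?thesis
    unfolding G n_def N_def .
qed

lemma Delta_bar_ge:
  assumes "s \<in> {1..t}"
  shows "f (w s) - fstar \<le> Delta_bar f fstar w t"
  unfolding Delta_bar_def using assms by (intro diff_right_mono Max_ge) auto

lemma grad_norm_le_sqrt_Delta_bar: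
  fixes f :: "'a::euclidean_space \<Rightarrow> real" and gradf :: "'a \<Rightarrow> 'a"
  assumes grad: "\<And>x. (f has_derivative (\<lambda>h. gradf x \<bullet> h)) (at x)"
    and smooth: "\<And>x y. norm (gradf x - gradf y) \<le> \<beta> * norm (x - y)"
    and fmin: "\<And>x. fstar \<le> f x"
    and s: "s \<in> {1..t}"
  shows "norm (gradf (w s)) \<le> sqrt (2 * \<beta>) * sqrt (Delta_bar f fstar w t)"
proof -
  have "(norm (gradf (w s)))\<^sup>2 \<le> 2 * \<beta> * (f (w s) - fstar)"
    by (rule smooth_grad_norm_square_le[OF grad smooth fmin])
  also have "\<dots> \<le> 2 * \<beta> * Delta_bar f fstar w t"
    using Delta_bar_ge[OF s, of f w fstar] lipschitz_constant_nonneg[OF smooth] by (simp add: mult_left_mono)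
  finally show ?thesis
    by (simp add: real_le_rsqrt real_sqrt_mult[symmetric])
qed

lemma sum_le_sqrt_weighted:
  fixes a b q :: "nat \<Rightarrow> real"
  assumes le: "\<And>s. s \<in> A \<Longrightarrow> a s \<le> b s + (c\<^sub>0 + c\<^sub>1 * sqrt D) * q s" and D: "D \<ge> 0"
  shows "(\<Sum>s\<in>A. a s) \<le> (\<Sum>s\<in>A. b s) + c\<^sub>0 * (\<Sum>s\<in>A. q s) + D / 4 + (c\<^sub>1 * (\<Sum>s\<in>A. q s))\<^sup>2"
proof -
  define v where "v = c\<^sub>1 * (\<Sum>s\<in>A. q s)"
  have "(\<Sum>s\<in>A. a s) \<le> (\<Sum>s\<in>A. b s + (c\<^sub>0 + c\<^sub>1 * sqrt D) * q s)"
    using le by (rule sum_mono)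
  also have "\<dots> = (\<Sum>s\<in>A. b s) + c\<^sub>0 * (\<Sum>s\<in>A. q s) + sqrt D * v"
    unfolding v_def by (simp add: sum.distrib sum_distrib_left algebra_simps)
  also have "sqrt D * v \<le> D / 4 + v\<^sup>2"
    using D zero_le_power2[of "sqrt D / 2 - v"] by (simp add: power2_diff power_divide)
  finally show ?thesis
    unfolding v_def by simp
qed

theorem lemma7:
  fixes f :: "'a::euclidean_space \<Rightarrow> real" and gradf :: "'a \<Rightarrow> 'a"
    and \<beta> fstar \<eta> \<gamma> \<sigma>\<^sub>0 \<sigma>\<^sub>1 :: real
    and w g :: "nat \<Rightarrow> 'a" and t :: nat
  assumes grad: "\<And>x. (f has_derivative (\<lambda>h. gradf x \<bullet> h)) (at x)"
    and smooth: "\<And>x y. norm (gradf x - gradf y) \<le> \<beta> * norm (x - y)"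
    and fmin: "\<And>x. fstar \<le> f x" and fmin_att: "\<exists>x. f x = fstar"
    and eta_pos: "\<eta> > 0" and gamma_pos: "\<gamma> > 0"
    and sigma0: "\<sigma>\<^sub>0 \<ge> 0" and sigma1: "\<sigma>\<^sub>1 \<ge> 0"
    and noise: "\<And>s. s \<ge> 1 \<Longrightarrow>
        (norm (g s - gradf (w s)))\<^sup>2 \<le> \<sigma>\<^sub>0\<^sup>2 + \<sigma>\<^sub>1\<^sup>2 * (norm (gradf (w s)))\<^sup>2"
    and update: "\<And>s. s \<ge> 1 \<Longrightarrow> w (s + 1) = w s - ada_eta \<eta> \<gamma> g s *\<^sub>R g s"
    and t: "t \<ge> 1"
  shows "(\<Sum>s=1..t. \<bar>eta_tilde \<eta> \<gamma> \<sigma>\<^sub>0 \<sigma>\<^sub>1 gradf w g s - ada_eta \<eta> \<gamma> g s\<bar>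
            * (gradf (w s) \<bullet> g s))
    \<le> Delta_bar f fstar w t / 4
       + 1/2 * (\<Sum>s=1..t. eta_tilde \<eta> \<gamma> \<sigma>\<^sub>0 \<sigma>\<^sub>1 gradf w g s * (norm (gradf (w s)))\<^sup>2)
       + 2 * \<eta> * \<sigma>\<^sub>0 * (\<Sum>s=1..t. (norm (g s))\<^sup>2 / (adaG \<gamma> g s)\<^sup>2)
       + 8 * \<eta>\<^sup>2 * \<beta> * \<sigma>\<^sub>1\<^sup>2 * (\<Sum>s=1..t. (norm (g s))\<^sup>2 / (adaG \<gamma> g s)\<^sup>2)\<^sup>2"
proof -
  define q where "q s = (norm (g s))\<^sup>2 / (adaG \<gamma> g s)\<^sup>2" for s
  define D where "D = Delta_bar f fstar w t"
  have \<beta>: "\<beta> \<ge> 0"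
    by (rule lipschitz_constant_nonneg[OF smooth])
  have D: "D \<ge> 0"
    using Delta_bar_ge[of 1 t f w fstar] fmin[of "w 1"] t unfolding D_def by simp
  have "\<bar>eta_tilde \<eta> \<gamma> \<sigma>\<^sub>0 \<sigma>\<^sub>1 gradf w g s - ada_eta \<eta> \<gamma> g s\<bar> * (gradf (w s) \<bullet> g s)
      \<le> 1/2 * eta_tilde \<eta> \<gamma> \<sigma>\<^sub>0 \<sigma>\<^sub>1 gradf w g s * (norm (gradf (w s)))\<^sup>2
         + (\<eta> * \<sigma>\<^sub>0 + \<eta> * \<sigma>\<^sub>1 * sqrt (2 * \<beta>) * sqrt D) * q s" if s: "s \<in> {1..t}" for s
  proof -
    have "\<eta> * (\<sigma>\<^sub>0 + \<sigma>\<^sub>1 * norm (gradf (w s))) * q s \<le> \<eta> * (\<sigma>\<^sub>0 + \<sigma>\<^sub>1 * (sqrt (2 * \<beta>) * sqrt D)) * q s"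
      using grad_norm_le_sqrt_Delta_bar[OF grad smooth fmin s] eta_pos sigma1 unfolding D_def
      by (intro mult_right_mono mult_left_mono add_left_mono) (auto simp: q_def)
    then show ?thesis
      using eta_tilde_ada_eta_gap_le[of \<eta> \<gamma> \<sigma>\<^sub>0 \<sigma>\<^sub>1 s g gradf w] s eta_pos gamma_pos sigma0 sigma1 noise
      unfolding q_def by (fastforce simp: algebra_simps)
  qed
  then have "(\<Sum>s=1..t. \<bar>eta_tilde \<eta> \<gamma> \<sigma>\<^sub>0 \<sigma>\<^sub>1 gradf w g s - ada_eta \<eta> \<gamma> g s\<bar> * (gradf (w s) \<bullet> g s))
      \<le> (\<Sum>s=1..t. 1/2 * eta_tilde \<eta> \<gamma> \<sigma>\<^sub>0 \<sigma>\<^sub>1 gradf w g s * (norm (gradf (w s)))\<^sup>2)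
         + \<eta> * \<sigma>\<^sub>0 * sum q {1..t} + D / 4 + (\<eta> * \<sigma>\<^sub>1 * sqrt (2 * \<beta>) * sum q {1..t})\<^sup>2"
    by (rule sum_le_sqrt_weighted[OF _ D])
  moreover have "(\<eta> * \<sigma>\<^sub>1 * sqrt (2 * \<beta>) * sum q {1..t})\<^sup>2 = 2 * (\<eta>\<^sup>2 * \<beta> * \<sigma>\<^sub>1\<^sup>2 * (sum q {1..t})\<^sup>2)"
    using \<beta> by (simp add: power_mult_distrib)
  moreover have "\<eta> * \<sigma>\<^sub>0 * sum q {1..t} \<ge> 0" and "\<eta>\<^sup>2 * \<beta> * \<sigma>\<^sub>1\<^sup>2 * (sum q {1..t})\<^sup>2 \<ge> 0"
    using eta_pos sigma0 \<beta> by (simp_all add: q_def sum_nonneg)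
  moreover have "(\<Sum>s=1..t. 1/2 * eta_tilde \<eta> \<gamma> \<sigma>\<^sub>0 \<sigma>\<^sub>1 gradf w g s * (norm (gradf (w s)))\<^sup>2)
      = 1/2 * (\<Sum>s=1..t. eta_tilde \<eta> \<gamma> \<sigma>\<^sub>0 \<sigma>\<^sub>1 gradf w g s * (norm (gradf (w s)))\<^sup>2)"
    by (simp add: sum_distrib_left mult.assoc)
  ultimately show ?thesis
    unfolding q_def D_def by linarith
qed

end
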